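(* In the multi-period single-sector model described in the context, for $n+m \le N_{t_k}$, \begin{displaymath} \mathbb{P}\left(D_{t_{k+1}} - D_{t_k} = n \mid I_{t_{k}} = m; N_{t_k}\right) = \tilde{P}\left(n; N_{t_k} - m, \eta_S + m \eta_{FS}, \eta_{FS}, \eta_{F}\right), \end{displaymath} where $\tilde{P}(n;N,\eta_S,\eta_{FS},\eta_F) := \mathbb{P}\left(\sum_{i=1}^N X_i=n\right) = \frac{1}{Z_1}\binom{N}{n}\left[e^{n\eta_F} + e^{\eta_S + n\eta_F + n\eta_{FS}}\right]$ is the loss distribution of the one-period single-sector model with $N$ firms and parameters $(\eta_S,\eta_{FS},\eta_F)$, and $Z_{N,\eta_S,\eta_{FS},\eta_F}:=Z_1 = (1+e^{\eta_F})^N + e^{\eta_S}(1+e^{\eta_F+\eta_{FS}})^N$ is its normalization constant.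
   Context: One-period single-sector model: for $N$ firms with default indicators $X_1,\dots,X_N\in\{0,1\}$ and real parameters $\eta_S,\eta_{FS},\eta_F$ (obtained by summing out one binary sector node connected to all firms in an Ising-type graphical model), $\mathbb{P}(X_1=x_1,\dots,X_N=x_N) = \frac{1}{Z_1}\left(e^{\eta_F\sum_i x_i} + e^{\eta_S + (\eta_{FS}+\eta_F)\sum_i x_i}\right)$ with $Z_1=(1+e^{\eta_F})^N + e^{\eta_S}(1+e^{\eta_F+\eta_{FS}})^N$. Multi-period construction: start with a single-sector graph with $N$ firms at payment dates $t_0=0<t_1<\dots$. Let $D_{t_k}$ be the number of firms defaulted up to $t_k$ and $N_{t_k}$ the number of firms remaining in the system, with $D_0=0$, $N_0=N$. At the beginning of each period each defaulted node still in the system is removed independently with probability $p_R$. The number of firms currently in default and still in the system is $I_{t_k} = D_{t_k} + N_{t_k} - N$. The number of additional defaults in $(t_k,t_{k+1})$ is defined by conditioning the one-period single-sector distribution on $N_{t_k}$ firms, with the $m$ in-default firms labelled $1,\dots,m$: $\mathbb{P}(D_{t_{k+1}} - D_{t_k} = n \mid I_{t_k} = m; N_{t_k}) := \sum_{i_1,\dots,i_n \in \{m+1,\dots,N_{t_k}\}} \mathbb{P}(X_{i_1}=\dots=X_{i_n}=1, X_{i_{n+1}}=\dots=X_{i_{N_{t_k}}}=0 \mid X_1=\dots=X_m=1)$, for $n+m\le N_{t_k}$ (the sum running over choices of the $n$ newly defaulting firms among the $N_{t_k}-m$ non-defaulted ones, the remaining ones surviving). *)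

theory Defs
  imports Complex_Main "HOL-Library.FuncSet"
begin

text \<open>A configuration is a function x assigning to each firm i in {1..N} its
  default indicator x i in {0,1} (and the default value undefined elsewhere).\<close>

definition configs :: "nat \<Rightarrow> (nat \<Rightarrow> nat) set" where
  "configs N = {1..N} \<rightarrow>\<^sub>E {0, 1}"

definition Z1 :: "nat \<Rightarrow> real \<Rightarrow> real \<Rightarrow> real \<Rightarrow> real" where
  "Z1 N eS eFS eF = (1 + exp eF) ^ N + exp eS * (1 + exp (eF + eFS)) ^ N"

definition joint :: "nat \<Rightarrow> real \<Rightarrow> real \<Rightarrow> real \<Rightarrow> (nat \<Rightarrow> nat) \<Rightarrow> real" where
  "joint N eS eFS eF x =
     (exp (eF * real (\<Sum>i=1..N. x i)) + exp (eS + (eFS + eF) * real (\<Sum>i=1..N. x i)))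
     / Z1 N eS eFS eF"

definition probE :: "nat \<Rightarrow> real \<Rightarrow> real \<Rightarrow> real \<Rightarrow> (nat \<Rightarrow> nat) set \<Rightarrow> real" where
  "probE N eS eFS eF E = (\<Sum>x\<in>configs N \<inter> E. joint N eS eFS eF x)"

definition condP :: "nat \<Rightarrow> real \<Rightarrow> real \<Rightarrow> real \<Rightarrow> (nat \<Rightarrow> nat) set \<Rightarrow> (nat \<Rightarrow> nat) set \<Rightarrow> real" where
  "condP N eS eFS eF A B = probE N eS eFS eF (A \<inter> B) / probE N eS eFS eF B"

definition Ptilde :: "nat \<Rightarrow> nat \<Rightarrow> real \<Rightarrow> real \<Rightarrow> real \<Rightarrow> real" where
  "Ptilde n N eS eFS eF = probE N eS eFS eF {x. (\<Sum>i=1..N. x i) = n}"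

text \<open>P(D_{t_{k+1}} - D_{t_k} = n | I_{t_k} = m; N_{t_k}), with Nt = N_{t_k}:
  sum over the sets S of n newly defaulting firms among {m+1..Nt} of
  P(X_i = 1 for i in S, X_i = 0 for i in {m+1..Nt} - S | X_1 = ... = X_m = 1).\<close>
definition new_defaults_prob :: "nat \<Rightarrow> real \<Rightarrow> real \<Rightarrow> real \<Rightarrow> nat \<Rightarrow> nat \<Rightarrow> real" where
  "new_defaults_prob Nt eS eFS eF m n =
     (\<Sum>S\<in>{S. S \<subseteq> {m+1..Nt} \<and> card S = n}.
        condP Nt eS eFS eF
          {x. (\<forall>i\<in>S. x i = 1) \<and> (\<forall>i\<in>{m+1..Nt} - S. x i = 0)}
          {x. \<forall>i\<in>{1..m}. x i = 1})"

end

theory Submission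
  imports Defs "HOL-Library.Indicator_Function"
begin

text \<open>A configuration with k defaults has unnormalised mass
  w(k) = exp (k eF) + exp (eS + k (eF + eFS)). Encoding configurations by their default
  sets turns every probability into a sum of w(card T) over sets T, and the binomial theorem
  identifies the sum of w(card U) over all subsets U of an n-set with Z1 n. Conditioning on
  firms 1..m being in default shifts every count by m, and w(m + k) = exp (m eF) w'(k), where
  w' is the weight with eS replaced by eS + m eFS. The factor exp (m eF) cancels in the
  conditional probability, which leaves the loss distribution of the remaining Nt - m firms
  with the shifted parameter.\<close>

lemma bij_betw_indicator_PiE:
  "bij_betw (\<lambda>T. restrict (indicator T) A) (Pow A) (A \<rightarrow>\<^sub>E {0::'b::zero_neq_one, 1})"
  by (rule bij_betw_byWitness[where f' = "\<lambda>x. {i\<in>A. x i = 1}"])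
     (auto simp: indicator_def PiE_def extensional_def fun_eq_iff)

lemma restrict_indicator_all_eq_1_iff:
  "B \<subseteq> A \<Longrightarrow> (\<forall>i\<in>B. restrict (indicator T) A i = (1::'a::zero_neq_one)) \<longleftrightarrow> B \<subseteq> T"
  by (auto simp: indicator_eq_1_iff)

lemma restrict_indicator_all_eq_0_iff:
  "B \<subseteq> A \<Longrightarrow> (\<forall>i\<in>B. restrict (indicator T) A i = (0::'a::zero_neq_one)) \<longleftrightarrow> B \<inter> T = {}"
  by (auto simp: indicator_eq_0_iff)

lemma sum_Pow_power_card:
  fixes c :: "'a::comm_semiring_1"
  assumes "finite A"
  shows "(\<Sum>U\<in>Pow A. c ^ card U) = (c + 1) ^ card A"
  using prod_add[OF assms, of "\<lambda>_. c" "\<lambda>_. 1"] by simp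

definition config_weight :: "real \<Rightarrow> real \<Rightarrow> real \<Rightarrow> nat \<Rightarrow> real" where
  "config_weight eS eFS eF k = exp (eF * real k) + exp (eS + (eFS + eF) * real k)"

lemma config_weight_add:
  "config_weight eS eFS eF (m + k) = exp (eF * real m) * config_weight (eS + real m * eFS) eFS eF k"
  unfolding config_weight_def by (simp add: algebra_simps flip: exp_add)

lemma Z1_eq_sum_Pow:
  assumes "finite A"
  shows "Z1 (card A) eS eFS eF = (\<Sum>U\<in>Pow A. config_weight eS eFS eF (card U))"
proof -
  have "config_weight eS eFS eF k = exp eF ^ k + exp eS * exp (eF + eFS) ^ k" for k
    unfolding config_weight_def by (simp add: algebra_simps exp_add flip: exp_of_nat_mult)
  then show ?thesis
    by (simp add: Z1_def sum.distrib sum_Pow_power_card assms flip: sum_distrib_left add.commute)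
qed

lemma Z1_pos: "Z1 N eS eFS eF > 0"
  unfolding Z1_def by (intro add_pos_pos mult_pos_pos zero_less_power) (auto intro: add_pos_pos)

lemma probE_eq_sum_default_sets:
  "probE N eS eFS eF E =
     (\<Sum>T | T \<subseteq> {1..N} \<and> restrict (indicator T) {1..N} \<in> E. config_weight eS eFS eF (card T))
     / Z1 N eS eFS eF"
proof -
  let ?cfg = "\<lambda>T. restrict (indicator T) {1..N} :: nat \<Rightarrow> nat"
  let ?D = "{T. T \<subseteq> {1..N} \<and> ?cfg T \<in> E}"
  have bij: "bij_betw ?cfg (Pow {1..N}) (configs N)"
    unfolding configs_def by (rule bij_betw_indicator_PiE)
  then have "configs N \<inter> E = ?cfg ` ?D"
    by (auto simp: bij_betw_def)
  moreover have "inj_on ?cfg ?D"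
    using bij by (auto simp: bij_betw_def intro: inj_on_subset)
  moreover have "joint N eS eFS eF (?cfg T) = config_weight eS eFS eF (card T) / Z1 N eS eFS eF"
    if "T \<subseteq> {1..N}" for T
  proof -
    have "(\<Sum>i=1..N. ?cfg T i) = card T"
      using that by (simp add: sum_indicator_eq_card Int_absorb1)
    then show ?thesis by (simp add: joint_def config_weight_def)
  qed
  ultimately show ?thesis
    by (simp add: probE_def sum.reindex sum_divide_distrib)
qed

lemma Ptilde_eq:
  "Ptilde n N eS eFS eF = real (N choose n) * config_weight eS eFS eF n / Z1 N eS eFS eF"
proof -
  have "{T. T \<subseteq> {1..N} \<and> restrict (indicator T) {1..N} \<in> {x::nat\<Rightarrow>nat. (\<Sum>i=1..N. x i) = n}}
      = {T. T \<subseteq> {1..N} \<and> card T = n}"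
    by (auto simp: sum_indicator_eq_card Int_absorb1)
  then show ?thesis
    by (simp add: Ptilde_def probE_eq_sum_default_sets n_subsets)
qed

lemma probE_initial_defaults:
  assumes "m \<le> Nt"
  shows "probE Nt eS eFS eF {x. \<forall>i\<in>{1..m}. x i = 1}
           = exp (eF * real m) * Z1 (Nt - m) (eS + real m * eFS) eFS eF / Z1 Nt eS eFS eF"
proof -
  have initial: "{1..m} \<subseteq> {1..Nt}"
    using assms by simp
  have "{T. T \<subseteq> {1..Nt} \<and> restrict (indicator T) {1..Nt} \<in> {x::nat\<Rightarrow>nat. \<forall>i\<in>{1..m}. x i = 1}}
      = {T. T \<subseteq> {1..Nt} \<and> {1..m} \<subseteq> T}" (is "?D = _")
    unfolding mem_Collect_eq restrict_indicator_all_eq_1_iff[OF initial] ..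
  also have "\<dots> = (\<union>) {1..m} ` Pow {m+1..Nt}"
  proof (intro equalityI subsetI)
    fix T assume "T \<in> {T. T \<subseteq> {1..Nt} \<and> {1..m} \<subseteq> T}"
    then show "T \<in> (\<union>) {1..m} ` Pow {m+1..Nt}"
      by (intro image_eqI[of _ _ "T - {1..m}"]) auto
  qed (use assms in auto)
  finally have default_sets: "?D = (\<union>) {1..m} ` Pow {m+1..Nt}" .
  have "U = ({1..m} \<union> U) - {1..m}" if "U \<subseteq> {m+1..Nt}" for U
    using that by auto
  then have "inj_on ((\<union>) {1..m}) (Pow {m+1..Nt})"
    by (metis PowD inj_onI)
  moreover have "card ({1..m} \<union> U) = m + card U" if "U \<subseteq> {m+1..Nt}" for U
    using that finite_subset[OF that] by (subst card_Un_disjoint) auto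
  ultimately have "probE Nt eS eFS eF {x. \<forall>i\<in>{1..m}. x i = 1}
      = exp (eF * real m) * (\<Sum>U\<in>Pow {m+1..Nt}. config_weight (eS + real m * eFS) eFS eF (card U))
        / Z1 Nt eS eFS eF"
    unfolding probE_eq_sum_default_sets default_sets
    by (simp add: sum.reindex config_weight_add sum_distrib_left)
  then show ?thesis
    using Z1_eq_sum_Pow[of "{m+1..Nt}"] by simp
qed

lemma probE_exact_defaults:
  assumes "m \<le> Nt" and "S \<subseteq> {m+1..Nt}"
  shows "probE Nt eS eFS eF
           ({x. (\<forall>i\<in>S. x i = 1) \<and> (\<forall>i\<in>{m+1..Nt} - S. x i = 0)} \<inter> {x. \<forall>i\<in>{1..m}. x i = 1})
           = config_weight eS eFS eF (m + card S) / Z1 Nt eS eFS eF"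
proof -
  have new: "S \<subseteq> {1..Nt}" and survivors: "{m+1..Nt} - S \<subseteq> {1..Nt}"
    and initial: "{1..m} \<subseteq> {1..Nt}"
    using assms by auto
  have "{T. T \<subseteq> {1..Nt} \<and> restrict (indicator T) {1..Nt} \<in>
          {x::nat\<Rightarrow>nat. (\<forall>i\<in>S. x i = 1) \<and> (\<forall>i\<in>{m+1..Nt} - S. x i = 0)} \<inter> {x. \<forall>i\<in>{1..m}. x i = 1}}
      = {T. T \<subseteq> {1..Nt} \<and> S \<subseteq> T \<and> ({m+1..Nt} - S) \<inter> T = {} \<and> {1..m} \<subseteq> T}"
      (is "?D = _")
    unfolding mem_Collect_eq Int_iff restrict_indicator_all_eq_1_iff[OF new]
      restrict_indicator_all_eq_0_iff[OF survivors] restrict_indicator_all_eq_1_iff[OF initial]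
    by blast
  also have "\<dots> = {{1..m} \<union> S}"
  proof -
    have "{1..Nt} = {1..m} \<union> {m+1..Nt}" "{1..m} \<inter> {m+1..Nt} = {}"
      using assms by auto
    then show ?thesis
      using assms(2) by (intro equalityI subsetI) blast+
  qed
  finally have "?D = {{1..m} \<union> S}" .
  moreover have "card ({1..m} \<union> S) = m + card S"
    using assms finite_subset[OF assms(2)] by (subst card_Un_disjoint) auto
  ultimately show ?thesis
    by (simp add: probE_eq_sum_default_sets)
qed

theorem proposition3:
  fixes Nt m n :: nat and eS eFS eF :: real
  assumes "n + m \<le> Nt"
  shows "new_defaults_prob Nt eS eFS eF m n
           = Ptilde n (Nt - m) (eS + real m * eFS) eFS eF"
proof -
  let ?eS' = "eS + real m * eFS"
  have "m \<le> Nt"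
    using assms by simp
  have "condP Nt eS eFS eF
          {x. (\<forall>i\<in>S. x i = 1) \<and> (\<forall>i\<in>{m+1..Nt} - S. x i = 0)} {x. \<forall>i\<in>{1..m}. x i = 1}
        = config_weight ?eS' eFS eF n / Z1 (Nt - m) ?eS' eFS eF"
    if "S \<in> {S. S \<subseteq> {m+1..Nt} \<and> card S = n}" for S
  proof -
    from that have S: "S \<subseteq> {m+1..Nt}" and "card S = n"
      by auto
    then show ?thesis
      unfolding condP_def probE_exact_defaults[OF \<open>m \<le> Nt\<close> S] probE_initial_defaults[OF \<open>m \<le> Nt\<close>]
      using Z1_pos[of Nt eS eFS eF] by (simp add: config_weight_add)
  qed
  then have "new_defaults_prob Nt eS eFS eF m n
      = real (card {S. S \<subseteq> {m+1..Nt} \<and> card S = n}) * config_weight ?eS' eFS eF n / Z1 (Nt - m) ?eS' eFS eF"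
    unfolding new_defaults_prob_def by simp
  also have "\<dots> = Ptilde n (Nt - m) ?eS' eFS eF"
    by (simp add: n_subsets Ptilde_eq)
  finally show ?thesis .
qed

end
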